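(* Let $k\ge1$. On $[0,1)$ the function $T_{k,1}$ is nonincreasing and the function $T_{k,k}$ is nondecreasing.
   Context: For an integer $k\ge1$, $f_k:[0,1]\to[0,1]$ denotes the unique decreasing function satisfying $f_k(x)^k-f_k(x)^{k+1}=x^k-x^{k+1}$ for all $x\in[0,1]$; it is continuous with $f_k(0)=1$, $f_k(1)=0$. For $1\le j\le k$ and $y\in[0,1)$ define $T_{k,j}(y):=\dfrac{(1-y)\,y^{j-1}}{f_k(y)^j}$. *)

theory Defs
  imports "HOL-Analysis.Analysis"
begin

definition fk :: "nat \<Rightarrow> real \<Rightarrow> real" where
  "fk k = (THE f. (\<forall>x\<in>{0..1}. f x \<in> {0..1} \<and> f x ^ k - f x ^ (k+1) = x ^ k - x ^ (k+1))
                 \<and> strict_antimono_on {0..1} f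
                 \<and> (\<forall>x. x \<notin> {0..1} \<longrightarrow> f x = 0))"

definition Tkj :: "nat \<Rightarrow> nat \<Rightarrow> real \<Rightarrow> real" where
  "Tkj k j y = (1 - y) * y ^ (j - 1) / (fk k y) ^ j"

end

theory Submission imports Defs begin

(* Write g(x) = x^k - x^(k+1) = x^k (1 - x).  On [0,1] the polynomial g
   increases strictly up to its peak m = k/(k+1) and then decreases strictly, with
   g(0) = g(1) = 0.  Hence every x in [0,1] has a unique "partner" p(x) on the other
   side of m with g(p(x)) = g(x); the map p is a strictly decreasing involution of
   [0,1], and it is the unique function described in the definition of f_k.

   The heart of the argument is an algebraic identity: if g(a) = g(b) with a <> b
   and b > 0, then (1 - a)/b = 1/S(a/b), where S(r) = 1 + r + ... + r^(k-1).
   Consequently T_{k,1}(u) = (1 - u)/p(u) = 1/S(u/p(u)); since u/p(u) increases and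
   S is increasing on [0,oo), T_{k,1} is nonincreasing on [0,1).  Finally, for
   0 < u < 1 one has T_{k,k}(u) = T_{k,1}(p(u)), so T_{k,k} is nondecreasing as the
   composition of two nonincreasing maps; the point u = 0 is checked directly. *)

definition gpoly :: "nat \<Rightarrow> real \<Rightarrow> real" where
  "gpoly k x = x ^ k - x ^ (k + 1)"

definition peak :: "nat \<Rightarrow> real" where
  "peak k = real k / (real k + 1)"

lemma peak_bounds: "k \<ge> 1 \<Longrightarrow> 0 < peak k \<and> peak k < 1"
  by (auto simp: peak_def field_simps)

lemma gpoly_nonneg: "0 \<le> x \<Longrightarrow> x \<le> 1 \<Longrightarrow> 0 \<le> gpoly k x"
proof -
  assume "0 \<le> x" "x \<le> 1"
  hence "0 \<le> x ^ k * (1 - x)" by simp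
  thus ?thesis by (simp add: gpoly_def algebra_simps)
qed

lemma gpoly_continuous: "continuous_on A (gpoly k)"
  unfolding gpoly_def[abs_def] by (intro continuous_intros)

text \<open>The derivative k x^(k-1) - (k+1) x^k factors as x^(k-1) (k - (k+1) x); its sign
  is that of m - x for x > 0.\<close>

lemma gpoly_deriv:
  assumes "k \<ge> 1"
  shows "(gpoly k has_real_derivative x ^ (k - 1) * (real k - (real k + 1) * x)) (at x)"
proof -
  have xk: "x ^ (k - 1) * x = x ^ k" using assms by (cases k) (simp_all add: algebra_simps)
  have "(gpoly k has_real_derivative real k * x ^ (k - 1) - real (k + 1) * x ^ k) (at x)"
    using xk unfolding gpoly_def[abs_def] by (auto intro!: derivative_eq_intros simp: algebra_simps)
  moreover have "real k * x ^ (k - 1) - real (k + 1) * x ^ k = x ^ (k - 1) * (real k - (real k + 1) * x)"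
    using assms by (cases k) (simp_all add: algebra_simps)
  ultimately show ?thesis by simp
qed

lemma gpoly_increasing:
  assumes "k \<ge> 1" "0 \<le> x" "x < y" "y \<le> peak k"
  shows "gpoly k x < gpoly k y"
proof (rule DERIV_pos_imp_increasing_open[OF assms(3)])
  fix z assume z: "x < z" "z < y"
  have "z * (real k + 1) < y * (real k + 1)" using z by (intro mult_strict_right_mono) auto
  hence "real k - (real k + 1) * z > 0" using assms(4) unfolding peak_def by (simp add: field_simps)
  moreover have "z ^ (k - 1) > 0" using z assms(2) by simp
  ultimately show "\<exists>d. (gpoly k has_real_derivative d) (at z) \<and> d > 0"
    using gpoly_deriv[OF assms(1)] by (intro exI[of _ "z ^ (k - 1) * (real k - (real k + 1) * z)"]) auto
qed (rule gpoly_continuous)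

lemma gpoly_decreasing:
  assumes "k \<ge> 1" "peak k \<le> x" "x < y" "y \<le> 1"
  shows "gpoly k y < gpoly k x"
proof (rule DERIV_neg_imp_decreasing_open[OF assms(3)])
  fix z assume z: "x < z" "z < y"
  have "x * (real k + 1) < z * (real k + 1)" using z by (intro mult_strict_right_mono) auto
  hence "real k - (real k + 1) * z < 0" using assms(2) unfolding peak_def by (simp add: field_simps)
  moreover have "z ^ (k - 1) > 0" using z assms(2) peak_bounds[OF assms(1)] by simp
  ultimately show "\<exists>d. (gpoly k has_real_derivative d) (at z) \<and> d < 0"
    using gpoly_deriv[OF assms(1)]
    by (intro exI[of _ "z ^ (k - 1) * (real k - (real k + 1) * z)"]) (auto simp: mult_pos_neg)
qed (rule gpoly_continuous)

lemma gpoly_inj_low: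
  assumes "k \<ge> 1" "0 \<le> a" "a \<le> peak k" "0 \<le> b" "b \<le> peak k" "gpoly k a = gpoly k b"
  shows "a = b"
  using gpoly_increasing[OF assms(1), of a b] gpoly_increasing[OF assms(1), of b a] assms
  by (cases a b rule: linorder_cases) auto

lemma gpoly_inj_high:
  assumes "k \<ge> 1" "peak k \<le> a" "a \<le> 1" "peak k \<le> b" "b \<le> 1" "gpoly k a = gpoly k b"
  shows "a = b"
  using gpoly_decreasing[OF assms(1), of a b] gpoly_decreasing[OF assms(1), of b a] assms
  by (cases a b rule: linorder_cases) auto

section \<open>The partner map\<close>

text \<open>By the intermediate value theorem, each value of g on the rising branch [0, m]
  is taken exactly once on the falling branch [m, 1], and vice versa.\<close>

lemma partner_on_high_branch:
  assumes k: "k \<ge> 1" and x: "0 \<le> x" "x \<le> peak k"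
  shows "\<exists>!y. peak k \<le> y \<and> y \<le> 1 \<and> gpoly k y = gpoly k x"
proof -
  have m: "0 < peak k" "peak k < 1" using peak_bounds[OF k] by auto
  have "gpoly k x \<le> gpoly k (peak k)"
    using gpoly_increasing[OF k x(1), of "peak k"] x(2) by (cases "x = peak k") auto
  moreover have "gpoly k 1 \<le> gpoly k x" using gpoly_nonneg[of x k] x m by (simp add: gpoly_def)
  ultimately obtain y where "peak k \<le> y \<and> y \<le> 1 \<and> gpoly k y = gpoly k x"
    using IVT2'[of "gpoly k" 1 _ "peak k", OF _ _ _ gpoly_continuous] m by auto
  thus ?thesis using gpoly_inj_high[OF k, of _ y] by (intro ex1I[of _ y]) auto
qed

lemma partner_on_low_branch:
  assumes k: "k \<ge> 1" and x: "peak k < x" "x \<le> 1"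
  shows "\<exists>!y. 0 \<le> y \<and> y \<le> peak k \<and> gpoly k y = gpoly k x"
proof -
  have m: "0 < peak k" "peak k < 1" using peak_bounds[OF k] by auto
  have "gpoly k x \<le> gpoly k (peak k)" using gpoly_decreasing[OF k _ x] by simp
  moreover have "gpoly k 0 = 0" using k by (simp add: gpoly_def)
  hence "gpoly k 0 \<le> gpoly k x" using gpoly_nonneg[of x k] x m by simp
  ultimately obtain y where "0 \<le> y \<and> y \<le> peak k \<and> gpoly k y = gpoly k x"
    using IVT'[of "gpoly k" 0 _ "peak k", OF _ _ _ gpoly_continuous] m by auto
  thus ?thesis using gpoly_inj_low[OF k, of _ y] by (intro ex1I[of _ y]) auto
qed

definition partner :: "nat \<Rightarrow> real \<Rightarrow> real" where
  "partner k x =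
    (if 0 \<le> x \<and> x \<le> peak k then (THE y. peak k \<le> y \<and> y \<le> 1 \<and> gpoly k y = gpoly k x)
     else if peak k < x \<and> x \<le> 1 then (THE y. 0 \<le> y \<and> y \<le> peak k \<and> gpoly k y = gpoly k x)
     else 0)"

lemma partner_low:
  assumes "k \<ge> 1" "0 \<le> x" "x \<le> peak k"
  shows "peak k \<le> partner k x \<and> partner k x \<le> 1 \<and> gpoly k (partner k x) = gpoly k x"
  using theI'[OF partner_on_high_branch[OF assms]] assms by (simp add: partner_def)

lemma partner_high:
  assumes "k \<ge> 1" "peak k < x" "x \<le> 1"
  shows "0 \<le> partner k x \<and> partner k x \<le> peak k \<and> gpoly k (partner k x) = gpoly k x"
  using theI'[OF partner_on_low_branch[OF assms]] assms by (simp add: partner_def)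

lemma partner_range:
  assumes k: "k \<ge> 1" and x: "0 \<le> x" "x \<le> 1"
  shows "0 \<le> partner k x \<and> partner k x \<le> 1 \<and> gpoly k (partner k x) = gpoly k x"
  using partner_low[OF k x(1)] partner_high[OF k _ x(2)] peak_bounds[OF k]
  by (cases "x \<le> peak k") auto

lemma partner_outside: "k \<ge> 1 \<Longrightarrow> \<not> (0 \<le> x \<and> x \<le> 1) \<Longrightarrow> partner k x = 0"
  using peak_bounds[of k] by (auto simp: partner_def)

lemma partner_fixpoint_iff:
  assumes k: "k \<ge> 1" and x: "0 \<le> x" "x \<le> 1"
  shows "partner k x = x \<longleftrightarrow> x = peak k"
proof
  assume "partner k x = x"
  thus "x = peak k" using partner_low[OF k x(1)] partner_high[OF k _ x(2)] by (cases "x \<le> peak k") auto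
next
  assume "x = peak k"
  thus "partner k x = x"
    using partner_low[OF k, of x] gpoly_inj_high[OF k, of "partner k x" x] peak_bounds[OF k] by auto
qed

lemma partner_only_roots:
  assumes k: "k \<ge> 1" and x: "0 \<le> x" "x \<le> 1" and z: "0 \<le> z" "z \<le> 1"
    and eq: "gpoly k z = gpoly k x"
  shows "z = x \<or> z = partner k x"
proof (cases "x \<le> peak k"; cases "z \<le> peak k")
  assume "x \<le> peak k" "z \<le> peak k"
  thus ?thesis using gpoly_inj_low[OF k z(1) _ x(1)] eq by auto
next
  assume "x \<le> peak k" "\<not> z \<le> peak k"
  thus ?thesis using gpoly_inj_high[OF k _ z(2), of "partner k x"] partner_low[OF k x(1)] eq by auto
next
  assume "\<not> x \<le> peak k" "z \<le> peak k"
  thus ?thesis using gpoly_inj_low[OF k z(1) _, of "partner k x"] partner_high[OF k _ x(2)] eq by auto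
next
  assume "\<not> x \<le> peak k" "\<not> z \<le> peak k"
  thus ?thesis using gpoly_inj_high[OF k _ z(2), of x] x eq by auto
qed

lemma partner_involution:
  assumes k: "k \<ge> 1" and x: "0 \<le> x" "x \<le> 1"
  shows "partner k (partner k x) = x"
proof -
  have p: "0 \<le> partner k x" "partner k x \<le> 1" "gpoly k x = gpoly k (partner k x)"
    using partner_range[OF k x] by auto
  have "x = partner k x \<or> x = partner k (partner k x)"
    using partner_only_roots[OF k p(1,2) x p(3)] .
  thus ?thesis using partner_fixpoint_iff[OF k x] by auto
qed

text \<open>The partner map is strictly decreasing: on each branch g is strictly monotone
  in opposite directions, and points from different branches are separated by m.\<close>

lemma partner_strict_decreasing:
  assumes k: "k \<ge> 1" and xy: "0 \<le> x" "x < y" "y \<le> 1"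
  shows "partner k y < partner k x"
proof -
  consider "y \<le> peak k" | "peak k < x" | "x \<le> peak k" "peak k < y" by linarith
  thus ?thesis
  proof cases
    case 1
    have "gpoly k x < gpoly k y" using gpoly_increasing[OF k xy(1,2) 1] .
    moreover note partner_low[OF k xy(1)] partner_low[OF k, of y]
    ultimately show ?thesis using gpoly_decreasing[OF k, of "partner k x" "partner k y"] 1 xy
      by (cases "partner k x" "partner k y" rule: linorder_cases) auto
  next
    case 2
    have "gpoly k y < gpoly k x" using gpoly_decreasing[OF k _ xy(2,3)] 2 by auto
    moreover note partner_high[OF k 2] partner_high[OF k _ xy(3)]
    ultimately show ?thesis
      using gpoly_increasing[OF k, of "partner k y" "partner k x"]
        gpoly_increasing[OF k, of "partner k x" "partner k y"] 2 xy
      by (cases "partner k x" "partner k y" rule: linorder_cases) auto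
  next
    case 3
    have "partner k y \<le> peak k" "peak k \<le> partner k x"
      using partner_low[OF k xy(1) 3(1)] partner_high[OF k 3(2) xy(3)] by auto
    moreover have "partner k y \<noteq> peak k"
      using partner_high[OF k 3(2) xy(3)] gpoly_decreasing[OF k _ 3(2) xy(3)] by auto
    ultimately show ?thesis by linarith
  qed
qed

text \<open>Since p(0) \<le> 1, p(1) \<ge> 0 and p is strictly decreasing, p maps [0,1) into (0,1],
  and (0,1) into itself.\<close>

lemma partner_pos:
  assumes k: "k \<ge> 1" and x: "0 \<le> x" "x < 1"
  shows "0 < partner k x"
  using partner_strict_decreasing[OF k x] partner_range[OF k, of 1] by auto

lemma partner_maps_open_interval:
  assumes k: "k \<ge> 1" and x: "0 < x" "x < 1"
  shows "0 < partner k x \<and> partner k x < 1"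
proof -
  have "partner k x < partner k 0" using partner_strict_decreasing[OF k _ x(1)] x by simp
  moreover have "partner k 0 \<le> 1" using partner_range[OF k, of 0] by simp
  ultimately show ?thesis using partner_pos[OF k, of x] x by simp
qed

section \<open>The partner map is f_k\<close>

definition is_fk :: "nat \<Rightarrow> (real \<Rightarrow> real) \<Rightarrow> bool" where
  "is_fk k f = ((\<forall>x\<in>{0..1}. f x \<in> {0..1} \<and> f x ^ k - f x ^ (k+1) = x ^ k - x ^ (k+1))
                 \<and> strict_antimono_on {0..1} f
                 \<and> (\<forall>x. x \<notin> {0..1} \<longrightarrow> f x = 0))"

lemma partner_is_fk:
  assumes k: "k \<ge> 1"
  shows "is_fk k (partner k)"
  unfolding is_fk_def
proof (intro conjI ballI allI impI monotone_onI)
  fix x :: real assume "x \<in> {0..1}"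
  thus "partner k x \<in> {0..1}" "partner k x ^ k - partner k x ^ (k+1) = x ^ k - x ^ (k+1)"
    using partner_range[OF k, of x] by (auto simp: gpoly_def)
next
  fix x y :: real assume "x \<in> {0..1}" "y \<in> {0..1}" "x < y"
  thus "partner k y < partner k x" using partner_strict_decreasing[OF k] by auto
next
  fix x :: real assume "x \<notin> {0..1}"
  thus "partner k x = 0" using partner_outside[OF k] by auto
qed

text \<open>Uniqueness: a decreasing solution h takes at each x one of the values x or
  partner x.  If h(x) = x at some x \<noteq> m, then at a point y strictly between x and m
  neither choice is compatible with h being decreasing.\<close>

lemma is_fk_unique:
  assumes k: "k \<ge> 1" and h: "is_fk k h"
  shows "h = partner k"
proof
  fix x
  have roots: "\<And>y. 0 \<le> y \<Longrightarrow> y \<le> 1 \<Longrightarrow> h y = y \<or> h y = partner k y"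
    using h partner_only_roots[OF k] by (auto simp: is_fk_def gpoly_def)
  have dec: "\<And>x y. 0 \<le> x \<Longrightarrow> x < y \<Longrightarrow> y \<le> 1 \<Longrightarrow> h y < h x"
    using h unfolding is_fk_def monotone_on_def by auto
  have m: "0 < peak k" "peak k < 1" using peak_bounds[OF k] by auto
  show "h x = partner k x"
  proof (cases "0 \<le> x \<and> x \<le> 1")
    case False thus ?thesis using h partner_outside[OF k False] by (auto simp: is_fk_def)
  next
    case True
    hence x: "0 \<le> x" "x \<le> 1" by auto
    show ?thesis
    proof (rule ccontr)
      assume "h x \<noteq> partner k x"
      hence hx: "h x = x" "x \<noteq> peak k" using roots[OF x] partner_fixpoint_iff[OF k x] by auto
      define y where "y = (x + peak k) / 2"
      show False
      proof (cases "x < peak k")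
        case True
        hence y: "x < y" "y < peak k" unfolding y_def by auto
        have "h y < x" using dec[OF x(1) y(1)] y m hx by auto
        moreover have "peak k \<le> partner k y" using partner_low[OF k] x y by auto
        ultimately show False using roots[of y] x y m by auto
      next
        case False
        hence y: "peak k < y" "y < x" using hx unfolding y_def by auto
        have "x < h y" using dec[OF _ y(2) x(2)] y m hx by auto
        moreover have "partner k y \<le> peak k" using partner_high[OF k y(1)] x y by auto
        ultimately show False using roots[of y] x y m by auto
      qed
    qed
  qed
qed

lemma fk_eq_partner: "k \<ge> 1 \<Longrightarrow> fk k = partner k"
  unfolding fk_def is_fk_def[symmetric] using partner_is_fk is_fk_unique by (rule the_equality)

section \<open>The ratio identity\<close>

definition geom :: "nat \<Rightarrow> real \<Rightarrow> real" where
  "geom k r = (\<Sum>i<k. r ^ i)"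

lemma geom_ge_1: "k \<ge> 1 \<Longrightarrow> 0 \<le> r \<Longrightarrow> 1 \<le> geom k r"
proof -
  assume "k \<ge> 1" "0 \<le> r"
  hence "(\<Sum>i\<in>{0}. r ^ i) \<le> (\<Sum>i<k. r ^ i)" by (intro sum_mono2) auto
  thus ?thesis by (simp add: geom_def)
qed

lemma geom_mono: "0 \<le> r \<Longrightarrow> r \<le> s \<Longrightarrow> geom k r \<le> geom k s"
  unfolding geom_def by (intro sum_mono power_mono) auto

text \<open>If a \<noteq> b are two roots of g(x) = c with b > 0, then with r = a/b the equation
  (1-a)(b^k - a^k) = b^k (b - a) divides by b^k (1 - r) to (1 - a) S(r) = b.\<close>

lemma gpoly_ratio_identity:
  assumes k: "k \<ge> 1" and ab: "0 \<le> a" "0 < b" "a \<noteq> b" and eq: "gpoly k a = gpoly k b"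
  shows "(1 - a) / b = 1 / geom k (a / b)"
proof -
  define r where "r = a / b"
  have a: "a = r * b" and r1: "r \<noteq> 1" and r0: "0 \<le> r" using ab by (auto simp: r_def)
  have "(1 - a) * (b ^ k - a ^ k) = b ^ k * (b - a)"
    using eq unfolding gpoly_def by (simp add: algebra_simps)
  moreover have "b ^ k - a ^ k = b ^ k * (1 - r) * geom k r"
  proof -
    have "b ^ k - a ^ k = b ^ k * (1 - r ^ k)" by (simp add: a power_mult_distrib algebra_simps)
    also have "\<dots> = b ^ k * ((1 - r) * geom k r)" by (simp add: geom_def one_diff_power_eq)
    finally show ?thesis by simp
  qed
  moreover have "b - a = b * (1 - r)" by (simp add: a algebra_simps)
  ultimately have "(b ^ k * (1 - r)) * ((1 - a) * geom k r) = (b ^ k * (1 - r)) * b"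
    by (simp add: algebra_simps)
  moreover have "b ^ k * (1 - r) \<noteq> 0" using ab r1 by simp
  ultimately have "(1 - a) * geom k r = b" using ab by simp
  moreover have "geom k r > 0" using geom_ge_1[OF k r0] by simp
  ultimately show ?thesis using ab by (simp add: r_def field_simps)
qed

text \<open>At the fixed point u = m both sides equal 1/k; elsewhere this is the ratio
  identity applied to the two distinct roots u and p(u).\<close>

lemma Tk1_formula:
  assumes k: "k \<ge> 1" and u: "0 \<le> u" "u < 1"
  shows "Tkj k 1 u = 1 / geom k (u / partner k u)"
proof -
  have "(1 - u) / partner k u = 1 / geom k (u / partner k u)"
  proof (cases "partner k u = u")
    case True
    hence u_peak: "u = peak k" using partner_fixpoint_iff[OF k] u by auto
    have "(1 - peak k) / peak k = 1 / real k" unfolding peak_def using k by (simp add: field_simps)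
    thus ?thesis using True u_peak peak_bounds[OF k] by (simp add: geom_def)
  next
    case False
    thus ?thesis using gpoly_ratio_identity[OF k u(1) partner_pos[OF k u]] partner_range[OF k, of u] u
      by auto
  qed
  thus ?thesis by (simp add: Tkj_def fk_eq_partner[OF k])
qed

theorem Tk1_antimono:
  assumes k: "k \<ge> 1"
  shows "antimono_on {0..<1} (Tkj k 1)"
proof (rule monotone_onI)
  fix r s :: real assume rs: "r \<in> {0..<1}" "s \<in> {0..<1}" "r \<le> s"
  have pos: "partner k r > 0" "partner k s > 0" using partner_pos[OF k] rs by auto
  have "partner k s \<le> partner k r"
    using partner_strict_decreasing[OF k, of r s] rs by (cases "r = s") auto
  hence "r / partner k r \<le> s / partner k s" using rs pos by (intro frac_le) auto
  hence "geom k (r / partner k r) \<le> geom k (s / partner k s)"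
    by (rule geom_mono[rotated]) (use rs pos in auto)
  moreover have "1 \<le> geom k (r / partner k r)" using geom_ge_1[OF k] rs pos by auto
  ultimately show "Tkj k 1 s \<le> Tkj k 1 r"
    using Tk1_formula[OF k] rs by (auto intro: divide_left_mono)
qed

text \<open>Using g(p(u)) = g(u) and the involution property,
  T_{k,k}(u) = (1 - p(u))/u = (1 - p(u))/p(p(u)) = T_{k,1}(p(u)).\<close>

lemma Tkk_eq_Tk1_partner:
  assumes k: "k \<ge> 1" and u: "0 < u" "u < 1"
  shows "Tkj k k u = Tkj k 1 (partner k u)"
proof -
  let ?v = "partner k u"
  have v: "0 < ?v" "gpoly k ?v = gpoly k u" using partner_pos[OF k] partner_range[OF k] u by auto
  have uk: "u ^ (k - 1) * u = u ^ k" using k by (cases k) (simp_all add: algebra_simps)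
  have eq: "(1 - u) * u ^ k = (1 - ?v) * ?v ^ k" using v unfolding gpoly_def by (simp add: algebra_simps)
  have "(1 - u) * u ^ (k - 1) / ?v ^ k = ((1 - u) * (u ^ (k - 1) * u)) / (?v ^ k * u)"
    using u v by (simp add: field_simps)
  also have "\<dots> = (1 - ?v) / u" unfolding uk eq using u v by (simp add: field_simps)
  finally show ?thesis using partner_involution[OF k, of u] u by (simp add: Tkj_def fk_eq_partner[OF k])
qed

theorem Tkk_mono:
  assumes k: "k \<ge> 1"
  shows "mono_on {0..<1} (Tkj k k)"
proof (rule monotone_onI)
  fix r s :: real assume rs: "r \<in> {0..<1}" "s \<in> {0..<1}" "r \<le> s"
  show "Tkj k k r \<le> Tkj k k s"
  proof (cases "r = 0")
    case True
    show ?thesis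
    proof (cases "k = 1")
      case True \<comment> \<open>then T_{k,k} = T_{k,1} = 1/S(\<dots>) = 1 is constant\<close>
      thus ?thesis using Tk1_formula[of 1] rs by (simp add: geom_def)
    next
      case False
      have "Tkj k k r = 0" using \<open>r = 0\<close> k False by (simp add: Tkj_def)
      moreover have "0 \<le> Tkj k k s"
        using rs partner_range[OF k, of s] by (simp add: Tkj_def fk_eq_partner[OF k])
      ultimately show ?thesis by simp
    qed
  next
    case False
    hence uv: "0 < r" "0 < s" "r < 1" "s < 1" using rs by auto
    have "partner k s \<le> partner k r"
      using partner_strict_decreasing[OF k, of r s] rs by (cases "r = s") auto
    moreover have "partner k s \<in> {0..<1}" "partner k r \<in> {0..<1}"
      using partner_maps_open_interval[OF k, of s] partner_maps_open_interval[OF k, of r] uv by simp_all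
    ultimately show ?thesis
      using Tk1_antimono[OF k] Tkk_eq_Tk1_partner[OF k] uv by (simp add: monotone_on_def)
  qed
qed

theorem mainTheorem8:
  fixes k :: nat
  assumes "k \<ge> 1"
  shows "antimono_on {0..<1} (Tkj k 1) \<and> mono_on {0..<1} (Tkj k k)"
  using Tk1_antimono[OF assms] Tkk_mono[OF assms] by simp

end
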